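(* Let $\mathbb{V}$ and $\mathbb{V}'$ be varieties with signatures $\mathcal{F}\subseteq\mathcal{F}'$ and defining sets of identities $\Sigma\subseteq\Sigma'$ respectively, and suppose $\mathbb{V}$ is BIT speciale with terms $0,\alpha_1,\dots,\alpha_n,\theta$. Let $T$ be any set of ideal terms determining ideals in $\mathbb{V}$. (a) The union of $T$ with the set of terms $$\alpha_i\big(\tau(\theta(y_{11},\dots,y_{1n},x_1),\dots,\theta(y_{k1},\dots,y_{kn},x_k)),\ \tau(x_1,\dots,x_k)\big),$$ for all $\tau\in\mathcal{F}'\setminus\mathcal{F}$ (of arity $k$) and all $1\le i\le n$, determines ideals in $\mathbb{V}'$. (b) The union of $T$ with the set of terms $$\alpha_i\big(\tau(x_1,\dots,x_{j-1},\theta(y_1,\dots,y_n,x_j),x_{j+1},\dots,x_k),\ \tau(x_1,\dots,x_k)\big),$$ for all $\tau\in\mathcal{F}'\setminus\mathcal{F}$ (of arity $k$) and all $1\le i\le n$, $1\le j\le k$, determines ideals in $\mathbb{V}'$. (In the displayed terms the $y$-variables are the ideal variables and the $x$-variables are parameters.)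
   Context: BIT speciale: the algebraic theory contains a constant $0$ and, for some $n\ge1$, binary terms $\alpha_1,\dots,\alpha_n$ and an $(n+1)$-ary term $\theta$ such that $\alpha_i(x,x)=0$ and $\theta(\alpha_1(x,y),\dots,\alpha_n(x,y),y)=x$ are identities; $\mathbb{V}'$ is then BIT speciale with the same terms. For a variety $\mathbb{W}$ with signature $\mathcal{G}$: an ideal term of $\mathbb{W}$ in the variables $y_1,\dots,y_p$ is a term $t(x_1,\dots,x_m,y_1,\dots,y_p)$ over $\mathcal{G}$ with $t(x_1,\dots,x_m,0,\dots,0)=0$ an identity of $\mathbb{W}$; a non-empty subset $H$ of a $\mathbb{W}$-algebra $A$ is an ideal if $t(a_1,\dots,a_m,b_1,\dots,b_p)\in H$ for every ideal term $t$, all $a_r\in A$, $b_s\in H$. A set $T$ of ideal terms determines ideals in $\mathbb{W}$ if for every $\mathbb{W}$-algebra $A$, a non-empty $H\subseteq A$ is an ideal iff every $t\in T$ takes values in $H$ whenever its $x$-variables are assigned elements of $A$ and its $y$-variables elements of $H$. *)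

theory Defs
  imports Main
begin

datatype 'f trm = Var nat | App 'f "'f trm list"

fun vars :: "'f trm \<Rightarrow> nat set" where
  "vars (Var v) = {v}"
| "vars (App f ts) = (\<Union>t\<in>set ts. vars t)"

fun wf_trm :: "('f \<Rightarrow> nat) \<Rightarrow> 'f set \<Rightarrow> 'f trm \<Rightarrow> bool" where
  "wf_trm ar F (Var v) = True"
| "wf_trm ar F (App f ts) = (f \<in> F \<and> length ts = ar f \<and> (\<forall>t\<in>set ts. wf_trm ar F t))"

fun subst :: "(nat \<Rightarrow> 'f trm) \<Rightarrow> 'f trm \<Rightarrow> 'f trm" where
  "subst \<sigma> (Var v) = \<sigma> v"
| "subst \<sigma> (App f ts) = App f (map (subst \<sigma>) ts)"

fun eval :: "('f \<Rightarrow> 'a list \<Rightarrow> 'a) \<Rightarrow> (nat \<Rightarrow> 'a) \<Rightarrow> 'f trm \<Rightarrow> 'a" where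
  "eval I \<rho> (Var v) = \<rho> v"
| "eval I \<rho> (App f ts) = I f (map (eval I \<rho>) ts)"

definition is_alg :: "('f \<Rightarrow> nat) \<Rightarrow> 'f set \<Rightarrow> 'a set \<Rightarrow> ('f \<Rightarrow> 'a list \<Rightarrow> 'a) \<Rightarrow> bool" where
  "is_alg ar F A I \<longleftrightarrow> A \<noteq> {} \<and>
     (\<forall>f\<in>F. \<forall>as. length as = ar f \<longrightarrow> set as \<subseteq> A \<longrightarrow> I f as \<in> A)"

definition satisfies :: "'a set \<Rightarrow> ('f \<Rightarrow> 'a list \<Rightarrow> 'a) \<Rightarrow> ('f trm \<times> 'f trm) set \<Rightarrow> bool" where
  "satisfies A I E \<longleftrightarrow>
     (\<forall>(s,t)\<in>E. \<forall>\<rho>. (\<forall>v. \<rho> v \<in> A) \<longrightarrow> eval I \<rho> s = eval I \<rho> t)"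

definition variety_alg :: "('f \<Rightarrow> nat) \<Rightarrow> 'f set \<Rightarrow> ('f trm \<times> 'f trm) set
    \<Rightarrow> 'a set \<Rightarrow> ('f \<Rightarrow> 'a list \<Rightarrow> 'a) \<Rightarrow> bool" where
  "variety_alg ar F E A I \<longleftrightarrow> is_alg ar F A I \<and> satisfies A I E"

inductive eqc :: "('f \<Rightarrow> nat) \<Rightarrow> 'f set \<Rightarrow> ('f trm \<times> 'f trm) set \<Rightarrow> 'f trm \<Rightarrow> 'f trm \<Rightarrow> bool"
  for ar F E where
  ax: "(s, t) \<in> E \<Longrightarrow> (\<forall>v. wf_trm ar F (\<sigma> v)) \<Longrightarrow> eqc ar F E (subst \<sigma> s) (subst \<sigma> t)"
| refl: "wf_trm ar F t \<Longrightarrow> eqc ar F E t t"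
| sym: "eqc ar F E s t \<Longrightarrow> eqc ar F E t s"
| trans: "eqc ar F E s t \<Longrightarrow> eqc ar F E t u \<Longrightarrow> eqc ar F E s u"
| cong: "f \<in> F \<Longrightarrow> length ss = ar f \<Longrightarrow> list_all2 (eqc ar F E) ss ts
          \<Longrightarrow> eqc ar F E (App f ss) (App f ts)"

definition alpha_app :: "'f trm \<Rightarrow> 'f trm \<Rightarrow> 'f trm \<Rightarrow> 'f trm" where
  "alpha_app \<alpha> s t = subst (\<lambda>v. if v = 0 then s else if v = 1 then t else Var v) \<alpha>"

definition theta_app :: "'f trm \<Rightarrow> 'f trm list \<Rightarrow> 'f trm" where
  "theta_app \<theta> ss = subst (\<lambda>v. if v < length ss then ss ! v else Var v) \<theta>"

definition bit_speciale :: "('f \<Rightarrow> nat) \<Rightarrow> 'f set \<Rightarrow> ('f trm \<times> 'f trm) set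
    \<Rightarrow> 'f trm \<Rightarrow> 'f trm list \<Rightarrow> 'f trm \<Rightarrow> nat \<Rightarrow> bool" where
  "bit_speciale ar F E zero \<alpha>s \<theta> n \<longleftrightarrow>
     n \<ge> 1 \<and> length \<alpha>s = n \<and>
     wf_trm ar F zero \<and> vars zero = {} \<and>
     (\<forall>\<alpha>\<in>set \<alpha>s. wf_trm ar F \<alpha> \<and> vars \<alpha> \<subseteq> {0, 1}) \<and>
     wf_trm ar F \<theta> \<and> vars \<theta> \<subseteq> {0..n} \<and>
     (\<forall>\<alpha>\<in>set \<alpha>s. eqc ar F E (alpha_app \<alpha> (Var 0) (Var 0)) zero) \<and>
     eqc ar F E (theta_app \<theta> (map (\<lambda>\<alpha>. alpha_app \<alpha> (Var 0) (Var 1)) \<alpha>s @ [Var 1])) (Var 0)"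

text \<open>An ideal term is a term t together with the set Y of its ideal variables;
  the remaining variables are the parameters.\<close>
definition ideal_term :: "('f \<Rightarrow> nat) \<Rightarrow> 'f set \<Rightarrow> ('f trm \<times> 'f trm) set
    \<Rightarrow> 'f trm \<Rightarrow> 'f trm \<Rightarrow> nat set \<Rightarrow> bool" where
  "ideal_term ar G E zero t Y \<longleftrightarrow> wf_trm ar G t \<and>
     eqc ar G E (subst (\<lambda>v. if v \<in> Y then zero else Var v) t) zero"

definition closed_under :: "('f \<Rightarrow> 'a list \<Rightarrow> 'a) \<Rightarrow> 'a set \<Rightarrow> 'a set \<Rightarrow> 'f trm \<Rightarrow> nat set \<Rightarrow> bool" where
  "closed_under I A H t Y \<longleftrightarrow>
     (\<forall>\<rho>. (\<forall>v. \<rho> v \<in> A) \<longrightarrow> (\<forall>v\<in>Y. \<rho> v \<in> H) \<longrightarrow> eval I \<rho> t \<in> H)"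

definition is_ideal :: "('f \<Rightarrow> nat) \<Rightarrow> 'f set \<Rightarrow> ('f trm \<times> 'f trm) set \<Rightarrow> 'f trm
    \<Rightarrow> 'a set \<Rightarrow> ('f \<Rightarrow> 'a list \<Rightarrow> 'a) \<Rightarrow> 'a set \<Rightarrow> bool" where
  "is_ideal ar G E zero A I H \<longleftrightarrow> H \<noteq> {} \<and> H \<subseteq> A \<and>
     (\<forall>t Y. ideal_term ar G E zero t Y \<longrightarrow> closed_under I A H t Y)"

text \<open>T determines ideals in the variety (G,E), for algebras with carrier in type 'a.\<close>
definition determines_ideals :: "'a itself \<Rightarrow> ('f \<Rightarrow> nat) \<Rightarrow> 'f set \<Rightarrow> ('f trm \<times> 'f trm) set
    \<Rightarrow> 'f trm \<Rightarrow> ('f trm \<times> nat set) set \<Rightarrow> bool" where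
  "determines_ideals (_::'a itself) ar G E zero T \<longleftrightarrow>
     (\<forall>(t, Y)\<in>T. ideal_term ar G E zero t Y) \<and>
     (\<forall>(A::'a set) I. variety_alg ar G E A I \<longrightarrow>
        (\<forall>H. H \<noteq> {} \<longrightarrow> H \<subseteq> A \<longrightarrow>
           (is_ideal ar G E zero A I H \<longleftrightarrow> (\<forall>(t, Y)\<in>T. closed_under I A H t Y))))"

text \<open>(a): x_j = Var j (j<k), y_{j l} = Var (k + j*n + l) (l<n); ideal variables {k..<k+k*n}.\<close>
definition terms_a :: "('f \<Rightarrow> nat) \<Rightarrow> 'f set \<Rightarrow> 'f set \<Rightarrow> 'f trm list \<Rightarrow> 'f trm \<Rightarrow> nat
    \<Rightarrow> ('f trm \<times> nat set) set" where
  "terms_a ar F F' \<alpha>s \<theta> n =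
     {(alpha_app (\<alpha>s ! i)
         (App \<tau> (map (\<lambda>j. theta_app \<theta> (map (\<lambda>l. Var (ar \<tau> + j * n + l)) [0..<n] @ [Var j]))
                     [0..<ar \<tau>]))
         (App \<tau> (map Var [0..<ar \<tau>])),
       {ar \<tau>..<ar \<tau> + ar \<tau> * n}) | \<tau> i. \<tau> \<in> F' - F \<and> i < n}"

text \<open>(b): x_j = Var j (j<k), y_l = Var (k + l) (l<n); ideal variables {k..<k+n}.\<close>
definition terms_b :: "('f \<Rightarrow> nat) \<Rightarrow> 'f set \<Rightarrow> 'f set \<Rightarrow> 'f trm list \<Rightarrow> 'f trm \<Rightarrow> nat
    \<Rightarrow> ('f trm \<times> nat set) set" where
  "terms_b ar F F' \<alpha>s \<theta> n =
     {(alpha_app (\<alpha>s ! i)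
         (App \<tau> ((map Var [0..<ar \<tau>])[j := theta_app \<theta> (map (\<lambda>l. Var (ar \<tau> + l)) [0..<n] @ [Var j])]))
         (App \<tau> (map Var [0..<ar \<tau>])),
       {ar \<tau>..<ar \<tau> + n}) | \<tau> i j. \<tau> \<in> F' - F \<and> i < n \<and> j < ar \<tau>}"

end

theory Submission
  imports Defs
begin

(* For a subset H of an algebra write a ~ b when alpha_i(a, b) lies in H for every i.  If H is an
   ideal of the F-reduct, the BIT speciale identities (theta recovers a from the alpha_i(a, b) and b)
   yield F-ideal terms showing that ~ is reflexive and transitive, that h ~ 0 for h in H, and that
   a ~ 0 forces a in H.  If moreover every operation preserves ~, then for an ideal term t we get
   t(a, h) ~ t(a, 0) = 0 by induction on t, hence t(a, h) in H.  The operations of F preserve ~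
   because the terms of type (a) built from them are F-ideal terms.  For a new operation,
   closure of H under its terms of type (a) gives preservation directly, and closure under its
   terms of type (b) gives it one argument at a time, which suffices by transitivity. *)

lemma subst_subst: "subst \<sigma> (subst \<tau> t) = subst (\<lambda>v. subst \<sigma> (\<tau> v)) t"
  by (induction t) auto

lemma subst_cong: "(\<And>v. v \<in> vars t \<Longrightarrow> \<sigma> v = \<sigma>' v) \<Longrightarrow> subst \<sigma> t = subst \<sigma>' t"
  by (induction t) auto

lemma subst_Var: "subst Var t = t"
  by (induction t) (auto simp: map_idI)

lemma subst_id_if_vars_fixed: "(\<And>v. v \<in> vars t \<Longrightarrow> \<sigma> v = Var v) \<Longrightarrow> subst \<sigma> t = t"
  using subst_cong[of t \<sigma> Var] by (simp add: subst_Var)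

lemma subst_ground: "vars t = {} \<Longrightarrow> subst \<sigma> t = t"
  using subst_id_if_vars_fixed by blast

lemma wf_trm_subst:
  "wf_trm ar G t \<Longrightarrow> (\<And>v. v \<in> vars t \<Longrightarrow> wf_trm ar G (\<sigma> v)) \<Longrightarrow> wf_trm ar G (subst \<sigma> t)"
  by (induction t) auto

lemma wf_trm_mono: "F \<subseteq> G \<Longrightarrow> wf_trm ar F t \<Longrightarrow> wf_trm ar G t"
  by (induction t) auto

lemma eval_subst: "eval I \<rho> (subst \<sigma> t) = eval I (\<lambda>v. eval I \<rho> (\<sigma> v)) t"
  by (induction t) (simp_all cong: map_cong)

lemma eval_cong: "(\<And>v. v \<in> vars t \<Longrightarrow> \<rho> v = \<rho>' v) \<Longrightarrow> eval I \<rho> t = eval I \<rho>' t"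
proof (induction t)
  case (App f ts)
  then have "map (eval I \<rho>) ts = map (eval I \<rho>') ts" by (auto intro: map_cong)
  then show ?case by (simp only: eval.simps)
qed simp

lemma eval_in:
  "is_alg ar G A I \<Longrightarrow> wf_trm ar G t \<Longrightarrow> (\<And>v. \<rho> v \<in> A) \<Longrightarrow> eval I \<rho> t \<in> A"
proof (induction t)
  case (App f ts)
  then have "set (map (eval I \<rho>) ts) \<subseteq> A" by auto
  then show ?case using App unfolding is_alg_def by simp
qed simp

lemma variety_alg_reduct:
  "F \<subseteq> G \<Longrightarrow> \<Sigma> \<subseteq> E \<Longrightarrow> variety_alg ar G E A I \<Longrightarrow> variety_alg ar F \<Sigma> A I"
  unfolding variety_alg_def satisfies_def is_alg_def by blast

lemma eqc_mono:
  assumes "eqc ar F \<Sigma> s t" "F \<subseteq> G" "\<Sigma> \<subseteq> E"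
  shows "eqc ar G E s t"
  using assms(1)
proof induction
  case (ax s t \<sigma>)
  then show ?case using assms(2,3) wf_trm_mono by (metis eqc.ax subsetD)
next
  case (refl t)
  then show ?case using assms(2) by (simp add: eqc.refl wf_trm_mono)
next
  case (cong f ss ts)
  then show ?case using assms(2) by (auto intro!: eqc.cong elim: list_all2_mono)
qed (blast intro: eqc.sym eqc.trans)+

lemma eqc_subst:
  assumes "eqc ar G E s t" "\<And>v. wf_trm ar G (\<sigma> v)"
  shows "eqc ar G E (subst \<sigma> s) (subst \<sigma> t)"
  using assms(1)
proof induction
  case (ax s t \<tau>)
  have "eqc ar G E (subst (\<lambda>v. subst \<sigma> (\<tau> v)) s) (subst (\<lambda>v. subst \<sigma> (\<tau> v)) t)"
    using ax assms(2) by (intro eqc.ax) (auto intro!: wf_trm_subst)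
  then show ?case by (simp add: subst_subst)
next
  case (refl t)
  then show ?case using assms(2) by (auto intro!: eqc.refl wf_trm_subst)
next
  case (cong f ss ts)
  then show ?case
    by (auto intro!: eqc.cong simp: list_all2_map1 list_all2_map2 elim: list_all2_mono)
qed (blast intro: eqc.sym eqc.trans)+

lemma eqc_subst_args:
  assumes "wf_trm ar G t" "\<And>v. v \<in> vars t \<Longrightarrow> eqc ar G E (\<sigma> v) (\<sigma>' v)"
  shows "eqc ar G E (subst \<sigma> t) (subst \<sigma>' t)"
  using assms
proof (induction t)
  case (App f ts)
  then have "\<forall>u\<in>set ts. eqc ar G E (subst \<sigma> u) (subst \<sigma>' u)" by auto
  then show ?case using App
    by (auto intro!: eqc.cong simp: list_all2_map1 list_all2_map2 list_all2_same)
qed simp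

lemma eqc_sound:
  assumes "eqc ar G E s t" "is_alg ar G A I" "satisfies A I E" "\<And>v. \<rho> v \<in> A"
  shows "eval I \<rho> s = eval I \<rho> t"
  using assms(1,4)
proof (induction arbitrary: \<rho>)
  case (ax s t \<sigma>)
  have "\<And>v. eval I \<rho> (\<sigma> v) \<in> A" using ax assms(2) by (auto intro!: eval_in)
  then show ?case using ax assms(3) by (auto simp: eval_subst satisfies_def)
next
  case (cong f ss ts)
  then have "map (eval I \<rho>) ss = map (eval I \<rho>) ts"
    by (auto simp: list_all2_conv_all_nth list_eq_iff_nth_eq)
  then show ?case by simp
qed auto

declare eqc.trans [trans]

abbreviation zero_subst :: "'f trm \<Rightarrow> nat set \<Rightarrow> nat \<Rightarrow> 'f trm" where
  "zero_subst zero Y \<equiv> \<lambda>v. if v \<in> Y then zero else Var v"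

lemma bit_speciale_mono:
  assumes "F \<subseteq> G" "\<Sigma> \<subseteq> E" "bit_speciale ar F \<Sigma> zero \<alpha>s \<theta> n"
  shows "bit_speciale ar G E zero \<alpha>s \<theta> n"
proof -
  have "wf_trm ar G t" if "wf_trm ar F t" for t
    using wf_trm_mono[OF assms(1) that] .
  moreover have "eqc ar G E s t" if "eqc ar F \<Sigma> s t" for s t
    using eqc_mono[OF that assms(1,2)] .
  ultimately show ?thesis
    using assms(3) unfolding bit_speciale_def by blast
qed

lemma ideal_term_mono:
  assumes "F \<subseteq> G" "\<Sigma> \<subseteq> E" "ideal_term ar F \<Sigma> zero t Y"
  shows "ideal_term ar G E zero t Y"
  using assms(3) unfolding ideal_term_def
  by (auto intro: wf_trm_mono[OF assms(1)] eqc_mono[OF _ assms(1,2)])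

lemma subst_alpha_app:
  "vars \<alpha> \<subseteq> {0, 1} \<Longrightarrow> subst \<sigma> (alpha_app \<alpha> s t) = alpha_app \<alpha> (subst \<sigma> s) (subst \<sigma> t)"
  unfolding alpha_app_def by (auto simp: subst_subst intro!: subst_cong)

lemma subst_theta_app:
  "vars \<theta> \<subseteq> {0..<length L} \<Longrightarrow> subst \<sigma> (theta_app \<theta> L) = theta_app \<theta> (map (subst \<sigma>) L)"
  unfolding theta_app_def by (auto simp: subst_subst intro!: subst_cong)

lemma wf_alpha_app:
  "wf_trm ar G \<alpha> \<Longrightarrow> wf_trm ar G s \<Longrightarrow> wf_trm ar G t \<Longrightarrow> wf_trm ar G (alpha_app \<alpha> s t)"
  unfolding alpha_app_def by (auto intro!: wf_trm_subst)

lemma wf_theta_app: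
  "wf_trm ar G \<theta> \<Longrightarrow> (\<And>u. u \<in> set L \<Longrightarrow> wf_trm ar G u) \<Longrightarrow> wf_trm ar G (theta_app \<theta> L)"
  unfolding theta_app_def by (auto intro!: wf_trm_subst)

lemma eqc_theta_app_args:
  "wf_trm ar G \<theta> \<Longrightarrow> list_all2 (eqc ar G E) L L' \<Longrightarrow> eqc ar G E (theta_app \<theta> L) (theta_app \<theta> L')"
  unfolding theta_app_def
  by (rule eqc_subst_args) (auto simp: list_all2_conv_all_nth intro: eqc.refl)

lemma eqc_alpha_app_diag:
  assumes bit: "bit_speciale ar G E zero \<alpha>s \<theta> n" and "\<alpha> \<in> set \<alpha>s" "wf_trm ar G s"
  shows "eqc ar G E (alpha_app \<alpha> s s) zero"
proof -
  have diag: "eqc ar G E (alpha_app \<alpha> (Var 0) (Var 0)) zero" and "vars \<alpha> \<subseteq> {0, 1}" "vars zero = {}"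
    using bit assms(2) by (auto simp: bit_speciale_def)
  moreover have "eqc ar G E (subst (\<lambda>_. s) (alpha_app \<alpha> (Var 0) (Var 0))) (subst (\<lambda>_. s) zero)"
    using assms(3) by (intro eqc_subst[OF diag])
  ultimately show ?thesis by (simp add: subst_alpha_app subst_ground)
qed

lemma eqc_theta_app_zeros:
  assumes bit: "bit_speciale ar G E zero \<alpha>s \<theta> n" and s: "wf_trm ar G s"
  shows "eqc ar G E (theta_app \<theta> (replicate n zero @ [s])) s"
proof -
  let ?L = "map (\<lambda>\<alpha>. alpha_app \<alpha> (Var 0) (Var 1)) \<alpha>s @ [Var 1]"
  have \<theta>: "eqc ar G E (theta_app \<theta> ?L) (Var 0)" "wf_trm ar G \<theta>" "vars \<theta> \<subseteq> {0..<length ?L}"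
    and \<alpha>s: "length \<alpha>s = n" "\<forall>\<alpha>\<in>set \<alpha>s. wf_trm ar G \<alpha> \<and> vars \<alpha> \<subseteq> {0, 1}"
    using bit by (auto simp: bit_speciale_def)
  have "list_all2 (eqc ar G E) (replicate n zero @ [s]) (map (\<lambda>\<alpha>. alpha_app \<alpha> s s) \<alpha>s @ [s])"
    using \<alpha>s(1) eqc_alpha_app_diag[OF bit _ s] s
    by (intro list_all2_appendI) (auto simp: list_all2_conv_all_nth intro: eqc.refl eqc.sym)
  then have "eqc ar G E (theta_app \<theta> (replicate n zero @ [s]))
      (theta_app \<theta> (map (\<lambda>\<alpha>. alpha_app \<alpha> s s) \<alpha>s @ [s]))"
    by (rule eqc_theta_app_args[OF \<theta>(2)])
  also have "theta_app \<theta> (map (\<lambda>\<alpha>. alpha_app \<alpha> s s) \<alpha>s @ [s]) = subst (\<lambda>_. s) (theta_app \<theta> ?L)"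
    using \<theta>(3) \<alpha>s(2) by (simp add: subst_theta_app subst_alpha_app cong: map_cong)
  also have "eqc ar G E \<dots> s"
    using eqc_subst[OF \<theta>(1), of "\<lambda>_. s"] s by simp
  finally show ?thesis .
qed

lemma eqc_theta_app_zero_prefix:
  assumes bit: "bit_speciale ar G E zero \<alpha>s \<theta> n" and "length us = n"
    and "\<And>u. u \<in> set us \<Longrightarrow> subst \<sigma> u = zero" and "wf_trm ar G (subst \<sigma> s)"
  shows "eqc ar G E (subst \<sigma> (theta_app \<theta> (us @ [s]))) (subst \<sigma> s)"
proof -
  have "vars \<theta> \<subseteq> {0..<length (us @ [s])}"
    using bit assms(2) by (auto simp: bit_speciale_def)
  moreover have "map (subst \<sigma>) (us @ [s]) = replicate n zero @ [subst \<sigma> s]"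
    using assms(2,3) by (auto intro!: nth_equalityI simp: nth_append)
  ultimately show ?thesis
    using eqc_theta_app_zeros[OF bit assms(4)] by (simp add: subst_theta_app)
qed

lemma ideal_term_alpha_app:
  assumes bit: "bit_speciale ar G E zero \<alpha>s \<theta> n" and \<alpha>: "\<alpha> \<in> set \<alpha>s"
    and "wf_trm ar G s" "wf_trm ar G t"
    and "eqc ar G E (subst (zero_subst zero Y) s) t" and "vars t \<inter> Y = {}"
  shows "ideal_term ar G E zero (alpha_app \<alpha> s t) Y"
proof -
  have \<alpha>_props: "wf_trm ar G \<alpha>" "vars \<alpha> \<subseteq> {0, 1}"
    using bit \<alpha> by (auto simp: bit_speciale_def)
  have "subst (zero_subst zero Y) t = t"
    using assms(6) by (intro subst_id_if_vars_fixed) auto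
  then have "subst (zero_subst zero Y) (alpha_app \<alpha> s t) = alpha_app \<alpha> (subst (zero_subst zero Y) s) t"
    using \<alpha>_props(2) by (simp add: subst_alpha_app)
  also have "eqc ar G E \<dots> (alpha_app \<alpha> t t)"
    unfolding alpha_app_def using \<alpha>_props(1) assms(4,5)
    by (intro eqc_subst_args) (auto intro: eqc.refl)
  also have "eqc ar G E \<dots> zero"
    using eqc_alpha_app_diag[OF bit \<alpha> assms(4)] .
  finally show ?thesis
    unfolding ideal_term_def using \<alpha>_props(1) assms(3,4) by (simp add: wf_alpha_app)
qed

definition compatible_op :: "('f \<Rightarrow> nat) \<Rightarrow> ('f \<Rightarrow> 'a list \<Rightarrow> 'a) \<Rightarrow> 'a set \<Rightarrow> ('a \<Rightarrow> 'a \<Rightarrow> bool)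
    \<Rightarrow> 'f \<Rightarrow> bool" where
  "compatible_op ar I A R f \<longleftrightarrow> (\<forall>xs ys. length xs = ar f \<longrightarrow> set xs \<subseteq> A \<longrightarrow> set ys \<subseteq> A \<longrightarrow>
     list_all2 R xs ys \<longrightarrow> R (I f xs) (I f ys))"

lemma compatible_op_eval:
  assumes alg: "is_alg ar G A I" and compat: "\<forall>f\<in>G. compatible_op ar I A R f"
    and "\<And>v. \<rho> v \<in> A" "\<And>v. \<rho>' v \<in> A" "\<And>v. R (\<rho> v) (\<rho>' v)"
  shows "wf_trm ar G t \<Longrightarrow> R (eval I \<rho> t) (eval I \<rho>' t)"
proof (induction t)
  case (App f ts)
  then have "list_all2 R (map (eval I \<rho>) ts) (map (eval I \<rho>') ts)"
    by (auto simp: list_all2_conv_all_nth)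
  moreover have "set (map (eval I \<rho>) ts) \<subseteq> A" "set (map (eval I \<rho>') ts) \<subseteq> A"
    using App assms(3,4) by (auto intro!: eval_in[OF alg])
  ultimately show ?case
    using compat App.prems unfolding compatible_op_def by simp
qed (simp add: assms(5))

lemma compatible_op_if_update_compatible:
  assumes refl: "\<And>a. a \<in> A \<Longrightarrow> R a a"
    and trans: "\<And>a b c. a \<in> A \<Longrightarrow> b \<in> A \<Longrightarrow> c \<in> A \<Longrightarrow> R a b \<Longrightarrow> R b c \<Longrightarrow> R a c"
    and closed: "\<And>zs. length zs = ar f \<Longrightarrow> set zs \<subseteq> A \<Longrightarrow> I f zs \<in> A"
    and update: "\<And>zs j x. length zs = ar f \<Longrightarrow> set zs \<subseteq> A \<Longrightarrow> j < ar f \<Longrightarrow> x \<in> A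
      \<Longrightarrow> R x (zs ! j) \<Longrightarrow> R (I f (zs[j := x])) (I f zs)"
  shows "compatible_op ar I A R f"
proof -
  have "R (I f (ps @ xs)) (I f (ps @ ys))"
    if "list_all2 R xs ys" "length (ps @ xs) = ar f" "set ps \<subseteq> A" "set xs \<subseteq> A" "set ys \<subseteq> A"
    for ps xs ys
    using that
  proof (induction arbitrary: ps rule: list_all2_induct)
    case Nil
    then show ?case using refl closed by simp
  next
    case (Cons x xs y ys)
    have len: "length (ps @ y # ys) = ar f"
      using Cons.prems(1) list_all2_lengthD[OF Cons.hyps(2)] by simp
    have "R (I f (ps @ x # xs)) (I f (ps @ x # ys))"
      using Cons.IH[of "ps @ [x]"] Cons.prems by simp
    moreover have "R (I f (ps @ x # ys)) (I f (ps @ y # ys))"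
      using update[of "ps @ y # ys" "length ps" x] Cons len by simp
    moreover have "I f (ps @ x # xs) \<in> A" "I f (ps @ x # ys) \<in> A" "I f (ps @ y # ys) \<in> A"
      using Cons.prems len by (auto intro!: closed)
    ultimately show ?case
      by (blast intro: trans)
  qed
  from this[of _ _ "[]"] show ?thesis
    unfolding compatible_op_def by simp
qed

definition alpha_op :: "('f \<Rightarrow> 'a list \<Rightarrow> 'a) \<Rightarrow> 'f trm \<Rightarrow> 'a \<Rightarrow> 'a \<Rightarrow> 'a" where
  "alpha_op I \<alpha> a b = eval I (\<lambda>v. if v = 0 then a else b) \<alpha>"

definition zero_val :: "('f \<Rightarrow> 'a list \<Rightarrow> 'a) \<Rightarrow> 'f trm \<Rightarrow> 'a" where
  "zero_val I zero = eval I (\<lambda>_. undefined) zero"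

definition alpha_rel :: "('f \<Rightarrow> 'a list \<Rightarrow> 'a) \<Rightarrow> 'f trm list \<Rightarrow> 'a set \<Rightarrow> 'a \<Rightarrow> 'a \<Rightarrow> bool" where
  "alpha_rel I \<alpha>s H a b \<longleftrightarrow> (\<forall>\<alpha>\<in>set \<alpha>s. alpha_op I \<alpha> a b \<in> H)"

lemma eval_alpha_app:
  "vars \<alpha> \<subseteq> {0, 1} \<Longrightarrow> eval I \<rho> (alpha_app \<alpha> s t) = alpha_op I \<alpha> (eval I \<rho> s) (eval I \<rho> t)"
  unfolding alpha_app_def alpha_op_def eval_subst by (auto intro!: eval_cong)

lemma eval_theta_app:
  "vars \<theta> \<subseteq> {0..<length L} \<Longrightarrow> eval I \<rho> (theta_app \<theta> L) = eval I (\<lambda>v. eval I \<rho> (L ! v)) \<theta>"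
  unfolding theta_app_def eval_subst by (auto intro!: eval_cong)

lemma eval_ground: "vars zero = {} \<Longrightarrow> eval I \<rho> zero = zero_val I zero"
  unfolding zero_val_def by (rule eval_cong) auto

locale bit_algebra =
  fixes ar :: "'f \<Rightarrow> nat" and F :: "'f set" and \<Sigma> :: "('f trm \<times> 'f trm) set"
    and zero \<theta> :: "'f trm" and \<alpha>s :: "'f trm list" and n :: nat
    and A :: "'a set" and I :: "'f \<Rightarrow> 'a list \<Rightarrow> 'a"
  assumes bit: "bit_speciale ar F \<Sigma> zero \<alpha>s \<theta> n"
    and variety: "variety_alg ar F \<Sigma> A I"
begin

lemma alg: "is_alg ar F A I" and sat: "satisfies A I \<Sigma>"
  using variety by (auto simp: variety_alg_def)

lemma bit_terms:
  "length \<alpha>s = n" "wf_trm ar F zero" "vars zero = {}"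
  "\<And>\<alpha>. \<alpha> \<in> set \<alpha>s \<Longrightarrow> wf_trm ar F \<alpha>" "\<And>\<alpha>. \<alpha> \<in> set \<alpha>s \<Longrightarrow> vars \<alpha> \<subseteq> {0, 1}"
  "wf_trm ar F \<theta>" "vars \<theta> \<subseteq> {0..n}"
  using bit by (auto simp: bit_speciale_def)

lemma sound: "eqc ar F \<Sigma> s t \<Longrightarrow> (\<And>v. \<rho> v \<in> A) \<Longrightarrow> eval I \<rho> s = eval I \<rho> t"
  using eqc_sound alg sat by blast

lemma zero_val_in: "zero_val I zero \<in> A"
proof -
  obtain a where "a \<in> A" using alg by (auto simp: is_alg_def)
  then have "eval I (\<lambda>_. a) zero \<in> A" using bit_terms by (intro eval_in[OF alg]) auto
  then show ?thesis using bit_terms by (simp add: eval_ground)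
qed

lemma alpha_op_in: "\<alpha> \<in> set \<alpha>s \<Longrightarrow> a \<in> A \<Longrightarrow> b \<in> A \<Longrightarrow> alpha_op I \<alpha> a b \<in> A"
  unfolding alpha_op_def using bit_terms by (intro eval_in[OF alg]) auto

lemma alpha_op_diag: "\<alpha> \<in> set \<alpha>s \<Longrightarrow> a \<in> A \<Longrightarrow> alpha_op I \<alpha> a a = zero_val I zero"
  using sound[OF eqc_alpha_app_diag[OF bit], of \<alpha> "Var 0" "\<lambda>_. a"] bit_terms
  by (simp add: eval_alpha_app eval_ground)

lemma theta_alpha_ops:
  assumes "a \<in> A" "b \<in> A"
  shows "eval I (\<lambda>v. if v < n then alpha_op I (\<alpha>s ! v) a b else b) \<theta> = a"
proof -
  let ?\<rho> = "\<lambda>v. if v = 0 then a else b"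
  let ?L = "map (\<lambda>\<alpha>. alpha_app \<alpha> (Var 0) (Var 1)) \<alpha>s @ [Var 1]"
  have "eval I ?\<rho> (theta_app \<theta> ?L) = eval I ?\<rho> (Var 0)"
    using bit assms by (intro sound) (auto simp: bit_speciale_def)
  then have "a = eval I ?\<rho> (theta_app \<theta> ?L)" by simp
  also have "\<dots> = eval I (\<lambda>v. eval I ?\<rho> (?L ! v)) \<theta>"
    using bit_terms by (intro eval_theta_app) auto
  also have "\<dots> = eval I (\<lambda>v. if v < n then alpha_op I (\<alpha>s ! v) a b else b) \<theta>"
    using bit_terms by (intro eval_cong) (auto simp: nth_append eval_alpha_app)
  finally show ?thesis by simp
qed

lemma eval_theta_app_alpha_ops:
  assumes "length us = n" "\<And>l. l < n \<Longrightarrow> eval I \<rho> (us ! l) = alpha_op I (\<alpha>s ! l) a (eval I \<rho> s)"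
    and "a \<in> A" "eval I \<rho> s \<in> A"
  shows "eval I \<rho> (theta_app \<theta> (us @ [s])) = a"
proof -
  have "eval I \<rho> (theta_app \<theta> (us @ [s])) = eval I (\<lambda>v. eval I \<rho> ((us @ [s]) ! v)) \<theta>"
    using bit_terms assms(1) by (intro eval_theta_app) auto
  also have "\<dots> = eval I (\<lambda>v. if v < n then alpha_op I (\<alpha>s ! v) a (eval I \<rho> s) else eval I \<rho> s) \<theta>"
    using bit_terms assms(1,2) by (intro eval_cong) (auto simp: nth_append)
  also have "\<dots> = a"
    using assms(3,4) by (rule theta_alpha_ops)
  finally show ?thesis .
qed

lemma alpha_rel_if_closed:
  assumes "\<And>i. i < n \<Longrightarrow> eval I \<rho> (t i) = alpha_op I (\<alpha>s ! i) a b"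
    and "\<And>i. i < n \<Longrightarrow> closed_under I A H (t i) Y"
    and "\<And>v. \<rho> v \<in> A" "\<And>v. v \<in> Y \<Longrightarrow> \<rho> v \<in> H"
  shows "alpha_rel I \<alpha>s H a b"
  unfolding alpha_rel_def
proof
  fix \<alpha> assume "\<alpha> \<in> set \<alpha>s"
  then obtain i where "i < n" "\<alpha> = \<alpha>s ! i"
    using bit_terms(1) by (auto simp: in_set_conv_nth)
  then show "alpha_op I \<alpha> a b \<in> H"
    using assms unfolding closed_under_def by metis
qed

end

section \<open>The terms of type (a)\<close>

definition term_a :: "('f \<Rightarrow> nat) \<Rightarrow> 'f trm list \<Rightarrow> 'f trm \<Rightarrow> nat \<Rightarrow> 'f \<Rightarrow> nat \<Rightarrow> 'f trm" where
  "term_a ar \<alpha>s \<theta> n f i = alpha_app (\<alpha>s ! i)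
     (App f (map (\<lambda>j. theta_app \<theta> (map (\<lambda>l. Var (ar f + j * n + l)) [0..<n] @ [Var j])) [0..<ar f]))
     (App f (map Var [0..<ar f]))"

lemma terms_a_conv: "terms_a ar F F' \<alpha>s \<theta> n =
  {(term_a ar \<alpha>s \<theta> n f i, {ar f..<ar f + ar f * n}) | f i. f \<in> F' - F \<and> i < n}"
  unfolding terms_a_def term_a_def by simp

lemma block_index_less: "j < k \<Longrightarrow> l < n \<Longrightarrow> j * n + l < k * (n::nat)"
  using mult_le_mono1[of "Suc j" k n] by simp

lemma block_index_bounds:
  assumes "v < k * (n::nat)"
  shows "v div n < k" "v mod n < n"
proof -
  have "n > 0" using assms by (cases n) auto
  then show "v div n < k" "v mod n < n"
    using assms by (auto simp: less_mult_imp_div_less)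
qed

lemma ideal_term_term_a:
  assumes bit: "bit_speciale ar G E zero \<alpha>s \<theta> n" and f: "f \<in> G" and i: "i < n"
  shows "ideal_term ar G E zero (term_a ar \<alpha>s \<theta> n f i) {ar f..<ar f + ar f * n}"
proof -
  let ?k = "ar f" and ?Y = "{ar f..<ar f + ar f * n}"
  let ?\<theta>j = "\<lambda>j. theta_app \<theta> (map (\<lambda>l. Var (?k + j * n + l)) [0..<n] @ [Var j])"
  have \<alpha>s: "\<alpha>s ! i \<in> set \<alpha>s" "\<forall>\<alpha>\<in>set \<alpha>s. wf_trm ar G \<alpha>" and \<theta>: "wf_trm ar G \<theta>"
    using bit i by (auto simp: bit_speciale_def)
  have "eqc ar G E (subst (zero_subst zero ?Y) (?\<theta>j j)) (Var j)" if "j < ?k" for j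
  proof -
    have "eqc ar G E (subst (zero_subst zero ?Y) (?\<theta>j j)) (subst (zero_subst zero ?Y) (Var j))"
      using that block_index_less[OF that] by (intro eqc_theta_app_zero_prefix[OF bit]) auto
    then show ?thesis using that by simp
  qed
  then have "eqc ar G E (subst (zero_subst zero ?Y) (App f (map ?\<theta>j [0..<?k]))) (App f (map Var [0..<?k]))"
    using f by (auto intro!: eqc.cong simp: list_all2_conv_all_nth)
  moreover have "wf_trm ar G (App f (map ?\<theta>j [0..<?k]))"
    using f \<theta> by (auto intro!: wf_theta_app)
  ultimately show ?thesis
    unfolding term_a_def using f by (intro ideal_term_alpha_app[OF bit \<alpha>s(1)]) auto
qed

context bit_algebra
begin

lemma compatible_if_closed_term_a:
  assumes closed: "\<And>i. i < n \<Longrightarrow> closed_under I A H (term_a ar \<alpha>s \<theta> n f i) {ar f..<ar f + ar f * n}"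
  shows "compatible_op ar I A (alpha_rel I \<alpha>s H) f"
  unfolding compatible_op_def
proof (intro allI impI)
  fix xs ys
  assume len: "length xs = ar f" and xs: "set xs \<subseteq> A" and ys: "set ys \<subseteq> A"
    and rel: "list_all2 (alpha_rel I \<alpha>s H) xs ys"
  define k where "k = ar f"
  have len_ys: "length ys = k" using rel len list_all2_lengthD unfolding k_def by fastforce
  \<comment> \<open>x_j := ys ! j and y_jl := alpha_l(xs ! j, ys ! j), so the j-th theta yields xs ! j\<close>
  define \<rho> where "\<rho> v = (if v < k then ys ! v else if v < k + k * n
    then alpha_op I (\<alpha>s ! ((v - k) mod n)) (xs ! ((v - k) div n)) (ys ! ((v - k) div n))
    else zero_val I zero)" for v
  have index: "(v - k) div n < k" "(v - k) mod n < n" if "k \<le> v" "v < k + k * n" for v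
    using that block_index_bounds[of "v - k" k n] by auto
  have \<rho>_A: "\<rho> v \<in> A" for v
    using index[of v] xs ys len len_ys zero_val_in bit_terms(1)
    by (auto simp: \<rho>_def k_def intro!: alpha_op_in)
  have \<rho>_H: "\<rho> v \<in> H" if "v \<in> {k..<k + k * n}" for v
    using that index[of v] rel bit_terms(1) list_all2_nthD[OF rel, of "(v - k) div n"] len
    by (auto simp: \<rho>_def k_def alpha_rel_def)
  have "eval I \<rho> (theta_app \<theta> (map (\<lambda>l. Var (k + j * n + l)) [0..<n] @ [Var j])) = xs ! j"
    if "j < k" for j
    using that block_index_less[OF that] xs ys len len_ys
    by (intro eval_theta_app_alpha_ops) (auto simp: \<rho>_def k_def)
  then have args: "map (\<lambda>j. eval I \<rho> (theta_app \<theta> (map (\<lambda>l. Var (k + j * n + l)) [0..<n] @ [Var j])))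
      [0..<k] = xs" and "map \<rho> [0..<k] = ys"
    using len len_ys by (auto intro!: nth_equalityI simp: k_def \<rho>_def)
  then have "eval I \<rho> (term_a ar \<alpha>s \<theta> n f i) = alpha_op I (\<alpha>s ! i) (I f xs) (I f ys)" if "i < n" for i
    using that bit_terms by (simp add: term_a_def k_def eval_alpha_app comp_def del: map_eq_conv)
  then show "alpha_rel I \<alpha>s H (I f xs) (I f ys)"
    using closed \<rho>_A \<rho>_H unfolding k_def by (rule alpha_rel_if_closed)
qed

end

section \<open>The terms of type (b)\<close>

definition term_b :: "('f \<Rightarrow> nat) \<Rightarrow> 'f trm list \<Rightarrow> 'f trm \<Rightarrow> nat \<Rightarrow> 'f \<Rightarrow> nat \<Rightarrow> nat \<Rightarrow> 'f trm" where
  "term_b ar \<alpha>s \<theta> n f i j = alpha_app (\<alpha>s ! i)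
     (App f ((map Var [0..<ar f])[j := theta_app \<theta> (map (\<lambda>l. Var (ar f + l)) [0..<n] @ [Var j])]))
     (App f (map Var [0..<ar f]))"

lemma terms_b_conv: "terms_b ar F F' \<alpha>s \<theta> n =
  {(term_b ar \<alpha>s \<theta> n f i j, {ar f..<ar f + n}) | f i j. f \<in> F' - F \<and> i < n \<and> j < ar f}"
  unfolding terms_b_def term_b_def by simp

lemma ideal_term_term_b:
  assumes bit: "bit_speciale ar G E zero \<alpha>s \<theta> n" and f: "f \<in> G" and i: "i < n" and j: "j < ar f"
  shows "ideal_term ar G E zero (term_b ar \<alpha>s \<theta> n f i j) {ar f..<ar f + n}"
proof -
  let ?k = "ar f" and ?Y = "{ar f..<ar f + n}"
  let ?\<theta>j = "theta_app \<theta> (map (\<lambda>l. Var (?k + l)) [0..<n] @ [Var j])"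
  have \<alpha>s: "\<alpha>s ! i \<in> set \<alpha>s" "\<forall>\<alpha>\<in>set \<alpha>s. wf_trm ar G \<alpha>" and \<theta>: "wf_trm ar G \<theta>"
    using bit i by (auto simp: bit_speciale_def)
  have "eqc ar G E (subst (zero_subst zero ?Y) ?\<theta>j) (subst (zero_subst zero ?Y) (Var j))"
    using j by (intro eqc_theta_app_zero_prefix[OF bit]) auto
  then have "eqc ar G E (subst (zero_subst zero ?Y) ((map Var [0..<?k])[j := ?\<theta>j] ! m)) (Var m)"
    if "m < ?k" for m
    using that j by (auto simp: nth_list_update intro: eqc.refl)
  then have "eqc ar G E (subst (zero_subst zero ?Y) (App f ((map Var [0..<?k])[j := ?\<theta>j])))
      (App f (map Var [0..<?k]))"
    using f by (auto intro!: eqc.cong simp: list_all2_conv_all_nth)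
  moreover have "wf_trm ar G ?\<theta>j"
    using \<theta> by (auto intro!: wf_theta_app)
  then have "wf_trm ar G (App f ((map Var [0..<?k])[j := ?\<theta>j]))"
    using f subsetD[OF set_update_subset_insert[of "map Var [0..<?k]" j ?\<theta>j]] by fastforce
  ultimately show ?thesis
    unfolding term_b_def using f by (intro ideal_term_alpha_app[OF bit \<alpha>s(1)]) auto
qed

context bit_algebra
begin

lemma alpha_rel_update_if_closed_term_b:
  assumes closed: "\<And>i. i < n \<Longrightarrow> closed_under I A H (term_b ar \<alpha>s \<theta> n f i j) {ar f..<ar f + n}"
    and j: "j < ar f" and zs: "length zs = ar f" "set zs \<subseteq> A" and x: "x \<in> A"
    and rel: "alpha_rel I \<alpha>s H x (zs ! j)"
  shows "alpha_rel I \<alpha>s H (I f (zs[j := x])) (I f zs)"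
proof -
  define k where "k = ar f"
  \<comment> \<open>x_m := zs ! m and y_l := alpha_l(x, zs ! j), so theta yields x\<close>
  define \<rho> where "\<rho> v = (if v < k then zs ! v
    else if v < k + n then alpha_op I (\<alpha>s ! (v - k)) x (zs ! j) else zero_val I zero)" for v
  have zj: "zs ! j \<in> A" using zs j by auto
  have \<rho>_A: "\<rho> v \<in> A" for v
    using zs zj x zero_val_in bit_terms(1) by (auto simp: \<rho>_def k_def intro!: alpha_op_in)
  have \<rho>_H: "\<rho> v \<in> H" if "v \<in> {k..<k + n}" for v
    using that rel bit_terms(1) by (auto simp: \<rho>_def alpha_rel_def)
  have "eval I \<rho> (theta_app \<theta> (map (\<lambda>l. Var (k + l)) [0..<n] @ [Var j])) = x"
    using j x zj by (intro eval_theta_app_alpha_ops) (auto simp: \<rho>_def k_def)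
  moreover have "map \<rho> [0..<k] = zs"
    using zs by (auto intro!: nth_equalityI simp: k_def \<rho>_def)
  ultimately have "eval I \<rho> (term_b ar \<alpha>s \<theta> n f i j) = alpha_op I (\<alpha>s ! i) (I f (zs[j := x])) (I f zs)"
    if "i < n" for i
    using that bit_terms by (simp add: term_b_def k_def eval_alpha_app map_update comp_def del: map_eq_conv)
  then show ?thesis
    using closed \<rho>_A \<rho>_H unfolding k_def by (rule alpha_rel_if_closed)
qed

end

section \<open>The relation induced by an ideal\<close>

locale bit_ideal = bit_algebra +
  fixes H :: "'a set"
  assumes ideal: "is_ideal ar F \<Sigma> zero A I H"
begin

lemma ideal_sub: "H \<subseteq> A"
  using ideal by (simp add: is_ideal_def)

lemma eval_in_ideal:
  "ideal_term ar F \<Sigma> zero t Y \<Longrightarrow> (\<And>v. \<rho> v \<in> A) \<Longrightarrow> (\<And>v. v \<in> Y \<Longrightarrow> \<rho> v \<in> H) \<Longrightarrow> eval I \<rho> t \<in> H"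
  using ideal unfolding is_ideal_def closed_under_def by blast

lemma zero_val_mem: "zero_val I zero \<in> H"
proof -
  have "ideal_term ar F \<Sigma> zero zero {}"
    unfolding ideal_term_def using bit_terms by (simp add: subst_ground eqc.refl)
  then have "eval I (\<lambda>_. zero_val I zero) zero \<in> H"
    using zero_val_in by (rule eval_in_ideal) auto
  then show ?thesis using bit_terms by (simp add: eval_ground)
qed

lemma alpha_rel_refl: "a \<in> A \<Longrightarrow> alpha_rel I \<alpha>s H a a"
  unfolding alpha_rel_def using alpha_op_diag zero_val_mem by simp

lemma alpha_rel_zero_val: "h \<in> H \<Longrightarrow> alpha_rel I \<alpha>s H h (zero_val I zero)"
  unfolding alpha_rel_def
proof
  fix \<alpha> assume h: "h \<in> H" and \<alpha>: "\<alpha> \<in> set \<alpha>s"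
  have "ideal_term ar F \<Sigma> zero (alpha_app \<alpha> (Var 0) zero) {0}"
    using bit_terms by (intro ideal_term_alpha_app[OF bit \<alpha>]) (auto simp: subst_ground eqc.refl)
  then have "eval I (\<lambda>_. h) (alpha_app \<alpha> (Var 0) zero) \<in> H"
    using h ideal_sub by (intro eval_in_ideal) auto
  then show "alpha_op I \<alpha> h (zero_val I zero) \<in> H"
    using \<alpha> bit_terms by (simp add: eval_alpha_app eval_ground)
qed

lemma mem_if_alpha_rel_zero_val:
  assumes a: "a \<in> A" and rel: "alpha_rel I \<alpha>s H a (zero_val I zero)"
  shows "a \<in> H"
proof -
  let ?t = "theta_app \<theta> (map Var [0..<n] @ [zero])"
  let ?\<rho> = "\<lambda>v. if v < n then alpha_op I (\<alpha>s ! v) a (zero_val I zero) else a"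
  have "eqc ar F \<Sigma> (subst (zero_subst zero {0..<n}) ?t) (subst (zero_subst zero {0..<n}) zero)"
    using bit_terms by (intro eqc_theta_app_zero_prefix[OF bit]) (auto simp: subst_ground)
  then have "ideal_term ar F \<Sigma> zero ?t {0..<n}"
    unfolding ideal_term_def using bit_terms by (auto simp: subst_ground intro!: wf_theta_app)
  moreover have "?\<rho> v \<in> A" for v
    using a zero_val_in bit_terms(1) by (auto intro!: alpha_op_in)
  moreover have "?\<rho> v \<in> H" if "v \<in> {0..<n}" for v
    using that rel bit_terms(1) by (auto simp: alpha_rel_def)
  ultimately have "eval I ?\<rho> ?t \<in> H"
    by (rule eval_in_ideal)
  moreover have "eval I ?\<rho> ?t = a"
    using a zero_val_in bit_terms by (intro eval_theta_app_alpha_ops) (auto simp: eval_ground)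
  ultimately show ?thesis by simp
qed

lemma alpha_rel_trans:
  assumes abc: "a \<in> A" "b \<in> A" "c \<in> A"
    and ab: "alpha_rel I \<alpha>s H a b" and bc: "alpha_rel I \<alpha>s H b c"
  shows "alpha_rel I \<alpha>s H a c"
  unfolding alpha_rel_def
proof
  fix \<alpha> assume \<alpha>: "\<alpha> \<in> set \<alpha>s"
  \<comment> \<open>alpha(a, c) = alpha(theta(alpha(a, b), theta(alpha(b, c), c)), c)\<close>
  let ?\<sigma> = "zero_subst zero {0..<2 * n}"
  let ?t1 = "theta_app \<theta> (map (\<lambda>l. Var (n + l)) [0..<n] @ [Var (2 * n)])"
  let ?t2 = "theta_app \<theta> (map Var [0..<n] @ [?t1])"
  let ?\<rho> = "\<lambda>v. if v < n then alpha_op I (\<alpha>s ! v) a b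
    else if v < 2 * n then alpha_op I (\<alpha>s ! (v - n)) b c else c"
  have "eqc ar F \<Sigma> (subst ?\<sigma> ?t2) (subst ?\<sigma> ?t1)"
    using bit_terms by (intro eqc_theta_app_zero_prefix[OF bit]) (auto intro!: wf_trm_subst wf_theta_app)
  also have "eqc ar F \<Sigma> (subst ?\<sigma> ?t1) (subst ?\<sigma> (Var (2 * n)))"
    by (intro eqc_theta_app_zero_prefix[OF bit]) (auto simp: bit_terms)
  finally have "ideal_term ar F \<Sigma> zero (alpha_app \<alpha> ?t2 (Var (2 * n))) {0..<2 * n}"
    using bit_terms \<alpha> by (intro ideal_term_alpha_app[OF bit \<alpha>]) (auto intro!: wf_theta_app)
  moreover have "?\<rho> v \<in> A" for v
    using abc bit_terms(1) by (auto intro!: alpha_op_in)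
  moreover have "?\<rho> v \<in> H" if "v \<in> {0..<2 * n}" for v
    using that ab bc bit_terms(1) by (auto simp: alpha_rel_def)
  ultimately have "eval I ?\<rho> (alpha_app \<alpha> ?t2 (Var (2 * n))) \<in> H"
    by (rule eval_in_ideal)
  moreover have "eval I ?\<rho> ?t1 = b"
    using abc by (intro eval_theta_app_alpha_ops) (auto simp: bit_terms)
  then have "eval I ?\<rho> ?t2 = a"
    using abc by (intro eval_theta_app_alpha_ops) (auto simp: bit_terms)
  ultimately show "alpha_op I \<alpha> a c \<in> H"
    using \<alpha> bit_terms by (simp add: eval_alpha_app)
qed

lemma compatible_if_closed_term_b:
  assumes "\<And>zs. length zs = ar f \<Longrightarrow> set zs \<subseteq> A \<Longrightarrow> I f zs \<in> A"
    and "\<And>i j. i < n \<Longrightarrow> j < ar f \<Longrightarrow> closed_under I A H (term_b ar \<alpha>s \<theta> n f i j) {ar f..<ar f + n}"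
  shows "compatible_op ar I A (alpha_rel I \<alpha>s H) f"
  using alpha_rel_refl alpha_rel_trans assms(1)
proof (rule compatible_op_if_update_compatible)
  show "alpha_rel I \<alpha>s H (I f (zs[j := x])) (I f zs)"
    if "length zs = ar f" "set zs \<subseteq> A" "j < ar f" "x \<in> A" "alpha_rel I \<alpha>s H x (zs ! j)" for zs j x
    using that by (intro alpha_rel_update_if_closed_term_b assms(2))
qed

lemma closed_if_compatible:
  assumes alg_G: "is_alg ar G A I" and sat_E: "satisfies A I E"
    and compat: "\<forall>f\<in>G. compatible_op ar I A (alpha_rel I \<alpha>s H) f"
    and t: "ideal_term ar G E zero t Y"
  shows "closed_under I A H t Y"
  unfolding closed_under_def
proof (intro allI impI)
  fix \<rho> assume \<rho>_A: "\<forall>v. \<rho> v \<in> A" and \<rho>_H: "\<forall>v\<in>Y. \<rho> v \<in> H"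
  define \<rho>0 where "\<rho>0 v = (if v \<in> Y then zero_val I zero else \<rho> v)" for v
  have \<rho>0_A: "\<rho>0 v \<in> A" for v
    using \<rho>_A zero_val_in by (simp add: \<rho>0_def)
  have "alpha_rel I \<alpha>s H (\<rho> v) (\<rho>0 v)" for v
    using \<rho>_A \<rho>_H alpha_rel_refl alpha_rel_zero_val by (simp add: \<rho>0_def)
  then have rel: "alpha_rel I \<alpha>s H (eval I \<rho> t) (eval I \<rho>0 t)"
    using t \<rho>_A \<rho>0_A by (intro compatible_op_eval[OF alg_G compat]) (auto simp: ideal_term_def)
  have "eval I \<rho>0 t = eval I \<rho> (subst (zero_subst zero Y) t)"
    unfolding eval_subst \<rho>0_def using bit_terms by (intro eval_cong) (auto simp: eval_ground)
  also have "\<dots> = eval I \<rho> zero"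
    using t \<rho>_A eqc_sound[OF _ alg_G sat_E] by (simp add: ideal_term_def)
  also have "\<dots> = zero_val I zero"
    using bit_terms by (simp add: eval_ground)
  finally have "alpha_rel I \<alpha>s H (eval I \<rho> t) (zero_val I zero)"
    using rel by simp
  moreover have "eval I \<rho> t \<in> A"
    using t \<rho>_A by (auto simp: ideal_term_def intro!: eval_in[OF alg_G])
  ultimately show "eval I \<rho> t \<in> H"
    using mem_if_alpha_rel_zero_val by blast
qed

lemma is_ideal_expansion:
  assumes var: "variety_alg ar G E A I"
    and compat: "\<forall>f\<in>G - F. compatible_op ar I A (alpha_rel I \<alpha>s H) f"
  shows "is_ideal ar G E zero A I H"
proof -
  have "compatible_op ar I A (alpha_rel I \<alpha>s H) f" if "f \<in> F" for f
    using ideal ideal_term_term_a[OF bit that]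
    by (intro compatible_if_closed_term_a) (auto simp: is_ideal_def)
  then have "closed_under I A H t Y" if "ideal_term ar G E zero t Y" for t Y
    using var compat that by (intro closed_if_compatible) (auto simp: variety_alg_def)
  then show ?thesis
    using ideal unfolding is_ideal_def by blast
qed

end

lemma determines_ideals_extension:
  fixes T X :: "('f trm \<times> nat set) set"
  assumes FF': "F \<subseteq> F'" and \<Sigma>\<Sigma>': "\<Sigma> \<subseteq> \<Sigma>'" and bit: "bit_speciale ar F \<Sigma> zero \<alpha>s \<theta> n"
    and T: "determines_ideals TYPE('a) ar F \<Sigma> zero T"
    and X_ideal: "\<forall>(t, Y)\<in>X. ideal_term ar F' \<Sigma>' zero t Y"
    and X_compat: "\<And>(A :: 'a set) I H f. variety_alg ar F' \<Sigma>' A I \<Longrightarrow> is_ideal ar F \<Sigma> zero A I H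
      \<Longrightarrow> \<forall>(t, Y)\<in>X. closed_under I A H t Y \<Longrightarrow> f \<in> F' - F
      \<Longrightarrow> compatible_op ar I A (alpha_rel I \<alpha>s H) f"
  shows "determines_ideals TYPE('a) ar F' \<Sigma>' zero (T \<union> X)"
proof -
  have ideal_terms: "ideal_term ar F' \<Sigma>' zero t Y" if "(t, Y) \<in> T \<union> X" for t Y
    using that T X_ideal ideal_term_mono[OF FF' \<Sigma>\<Sigma>'] by (auto simp: determines_ideals_def)
  show ?thesis
    unfolding determines_ideals_def
  proof (intro conjI allI impI)
    show "\<forall>(t, Y)\<in>T \<union> X. ideal_term ar F' \<Sigma>' zero t Y"
      using ideal_terms by auto
  next
    fix A :: "'a set" and I H
    assume var': "variety_alg ar F' \<Sigma>' A I" and H: "H \<noteq> {}" "H \<subseteq> A"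
    have var: "variety_alg ar F \<Sigma> A I"
      using variety_alg_reduct[OF FF' \<Sigma>\<Sigma>' var'] .
    show "is_ideal ar F' \<Sigma>' zero A I H \<longleftrightarrow> (\<forall>(t, Y)\<in>T \<union> X. closed_under I A H t Y)"
    proof
      assume "is_ideal ar F' \<Sigma>' zero A I H"
      then show "\<forall>(t, Y)\<in>T \<union> X. closed_under I A H t Y"
        using ideal_terms by (auto simp: is_ideal_def)
    next
      assume closed: "\<forall>(t, Y)\<in>T \<union> X. closed_under I A H t Y"
      then have "is_ideal ar F \<Sigma> zero A I H"
        using T var H by (auto simp: determines_ideals_def)
      then interpret bit_ideal ar F \<Sigma> zero \<theta> \<alpha>s n A I H
        using bit var by unfold_locales
      show "is_ideal ar F' \<Sigma>' zero A I H"
        using X_compat[OF var' ideal] closed var' by (intro is_ideal_expansion) auto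
    qed
  qed
qed

lemma determines_ideals_terms_a:
  assumes FF': "F \<subseteq> F'" and \<Sigma>\<Sigma>': "\<Sigma> \<subseteq> \<Sigma>'" and bit: "bit_speciale ar F \<Sigma> zero \<alpha>s \<theta> n"
    and T: "determines_ideals TYPE('a) ar F \<Sigma> zero T"
  shows "determines_ideals TYPE('a) ar F' \<Sigma>' zero (T \<union> terms_a ar F F' \<alpha>s \<theta> n)"
proof (rule determines_ideals_extension[OF FF' \<Sigma>\<Sigma>' bit T])
  show "\<forall>(t, Y)\<in>terms_a ar F F' \<alpha>s \<theta> n. ideal_term ar F' \<Sigma>' zero t Y"
    using ideal_term_term_a[OF bit_speciale_mono[OF FF' \<Sigma>\<Sigma>' bit]] by (auto simp: terms_a_conv)
next
  fix A :: "'a set" and I H f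
  assume var': "variety_alg ar F' \<Sigma>' A I"
    and closed: "\<forall>(t, Y)\<in>terms_a ar F F' \<alpha>s \<theta> n. closed_under I A H t Y" and f: "f \<in> F' - F"
  interpret bit_algebra ar F \<Sigma> zero \<theta> \<alpha>s n A I
    using bit variety_alg_reduct[OF FF' \<Sigma>\<Sigma>' var'] by unfold_locales
  show "compatible_op ar I A (alpha_rel I \<alpha>s H) f"
    using closed f by (intro compatible_if_closed_term_a) (auto simp: terms_a_conv)
qed

lemma determines_ideals_terms_b:
  assumes FF': "F \<subseteq> F'" and \<Sigma>\<Sigma>': "\<Sigma> \<subseteq> \<Sigma>'" and bit: "bit_speciale ar F \<Sigma> zero \<alpha>s \<theta> n"
    and T: "determines_ideals TYPE('a) ar F \<Sigma> zero T"
  shows "determines_ideals TYPE('a) ar F' \<Sigma>' zero (T \<union> terms_b ar F F' \<alpha>s \<theta> n)"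
proof (rule determines_ideals_extension[OF FF' \<Sigma>\<Sigma>' bit T])
  show "\<forall>(t, Y)\<in>terms_b ar F F' \<alpha>s \<theta> n. ideal_term ar F' \<Sigma>' zero t Y"
    using ideal_term_term_b[OF bit_speciale_mono[OF FF' \<Sigma>\<Sigma>' bit]] by (auto simp: terms_b_conv)
next
  fix A :: "'a set" and I H f
  assume var': "variety_alg ar F' \<Sigma>' A I" and ideal: "is_ideal ar F \<Sigma> zero A I H"
    and closed: "\<forall>(t, Y)\<in>terms_b ar F F' \<alpha>s \<theta> n. closed_under I A H t Y" and f: "f \<in> F' - F"
  interpret bit_ideal ar F \<Sigma> zero \<theta> \<alpha>s n A I H
    using bit variety_alg_reduct[OF FF' \<Sigma>\<Sigma>' var'] ideal by unfold_locales
  have "closed_under I A H (term_b ar \<alpha>s \<theta> n f i j) {ar f..<ar f + n}" if "i < n" "j < ar f" for i j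
    using closed f that unfolding terms_b_conv by blast
  then show "compatible_op ar I A (alpha_rel I \<alpha>s H) f"
    using var' f by (intro compatible_if_closed_term_b) (auto simp: variety_alg_def is_alg_def)
qed

theorem corollary2p9:
  fixes ar :: "'f \<Rightarrow> nat"
    and F F' :: "'f set"
    and \<Sigma> \<Sigma>' :: "('f trm \<times> 'f trm) set"
    and zero \<theta> :: "'f trm" and \<alpha>s :: "'f trm list" and n :: nat
    and T :: "('f trm \<times> nat set) set"
  assumes "F \<subseteq> F'" and "\<Sigma> \<subseteq> \<Sigma>'"
    and "\<forall>(s, t)\<in>\<Sigma>. wf_trm ar F s \<and> wf_trm ar F t"
    and "\<forall>(s, t)\<in>\<Sigma>'. wf_trm ar F' s \<and> wf_trm ar F' t"
    and "bit_speciale ar F \<Sigma> zero \<alpha>s \<theta> n"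
    and "determines_ideals TYPE('a) ar F \<Sigma> zero T"
  shows "determines_ideals TYPE('a) ar F' \<Sigma>' zero (T \<union> terms_a ar F F' \<alpha>s \<theta> n) \<and>
         determines_ideals TYPE('a) ar F' \<Sigma>' zero (T \<union> terms_b ar F F' \<alpha>s \<theta> n)"
  using determines_ideals_terms_a[OF assms(1,2,5,6)] determines_ideals_terms_b[OF assms(1,2,5,6)]
  by blast

end
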